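(* Let $\mathfrak g$ be of type $A_n$. For every $b\in\mathcal B(\infty)$ and $i\in I$, $\widetilde e_i^\ast(b)\in\mathcal B(\infty)\cup\{\mathbf 0\}$ and $\widetilde f_i^\ast(b)\in\mathcal B(\infty)$.
   Context: $I=\{1,\dots,n\}$. $\mathcal I=\{(s,t)\in\mathbb Z_{>0}\times I:s+t\le n+1\}$; $\mathcal B(\infty)$ is the set of $b=(b_{s,t})_{(s,t)\in\mathcal I}\in\mathbb Z_{\ge0}^{\mathcal I}$ with $b_{1,k}\ge b_{2,k-1}\ge\dots\ge b_{k,1}$ for $1\le k\le n$. Convention: $b_{s,t}=0$, $\mathbf e_{s,t}=0$ for $(s,t)\notin\mathcal I$. $\partial^\ast_{s,t}(b)=b_{s-1,t}-b_{s-1,t+1}-b_{s,t-1}+b_{s,t}$. For $1\le k\le i$: $\Sigma^\ast_k(b)=\sum_{t=1}^k\partial^\ast_{t,i+1-t}(b)$; $\varepsilon_i^\ast(b)=\max_k\Sigma_k^\ast(b)$; $m_i^\ast(b)$, $M_i^\ast(b)$ the smallest and largest maximizing $k$. $\widetilde f_i^\ast(b)=b+\sum_{t=1}^{m_i^\ast(b)}(\mathbf e_{t,i+1-t}-\mathbf e_{t-1,i+1-t})$; $\widetilde e_i^\ast(b)=b-\sum_{t=1}^{M_i^\ast(b)}(\mathbf e_{t,i+1-t}-\mathbf e_{t-1,i+1-t})$ if $\varepsilon_i^\ast(b)>0$, else $\widetilde e_i^\ast(b)=\mathbf 0$ (formal symbol). *)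

theory Defs
  imports Main
begin

(* Elements of \<int>^\<I> are functions nat \<Rightarrow> nat \<Rightarrow> int vanishing outside \<I>
   (this realises the convention b_{s,t} = 0 for (s,t) \<notin> \<I>). *)
definition idx :: "nat \<Rightarrow> (nat \<times> nat) set" where
  "idx n = {(s,t). 0 < s \<and> 1 \<le> t \<and> t \<le> n \<and> s + t \<le> n + 1}"

definition Binf :: "nat \<Rightarrow> (nat \<Rightarrow> nat \<Rightarrow> int) set" where
  "Binf n = {b. (\<forall>s t. (s,t) \<notin> idx n \<longrightarrow> b s t = 0)
              \<and> (\<forall>s t. (s,t) \<in> idx n \<longrightarrow> 0 \<le> b s t)
              \<and> (\<forall>k j. 1 \<le> k \<and> k \<le> n \<and> 1 \<le> j \<and> j < k \<longrightarrow>
                       b (j+1) (k-j) \<le> b j (k+1-j))}"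

definition evec :: "nat \<Rightarrow> nat \<Rightarrow> nat \<Rightarrow> (nat \<Rightarrow> nat \<Rightarrow> int)" where
  "evec n s t = (\<lambda>u v. if (s,t) \<in> idx n \<and> u = s \<and> v = t then 1 else 0)"

definition dstar :: "(nat \<Rightarrow> nat \<Rightarrow> int) \<Rightarrow> nat \<Rightarrow> nat \<Rightarrow> int" where
  "dstar b s t = b (s-1) t - b (s-1) (t+1) - b s (t-1) + b s t"

definition Sigstar :: "nat \<Rightarrow> (nat \<Rightarrow> nat \<Rightarrow> int) \<Rightarrow> nat \<Rightarrow> int" where
  "Sigstar i b k = (\<Sum>t=1..k. dstar b t (i+1-t))"

definition epsstar :: "nat \<Rightarrow> (nat \<Rightarrow> nat \<Rightarrow> int) \<Rightarrow> int" where
  "epsstar i b = Max (Sigstar i b ` {1..i})"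

definition mstar :: "nat \<Rightarrow> (nat \<Rightarrow> nat \<Rightarrow> int) \<Rightarrow> nat" where
  "mstar i b = Min {k \<in> {1..i}. Sigstar i b k = epsstar i b}"

definition Mstar :: "nat \<Rightarrow> (nat \<Rightarrow> nat \<Rightarrow> int) \<Rightarrow> nat" where
  "Mstar i b = Max {k \<in> {1..i}. Sigstar i b k = epsstar i b}"

definition shiftvec :: "nat \<Rightarrow> nat \<Rightarrow> nat \<Rightarrow> (nat \<Rightarrow> nat \<Rightarrow> int)" where
  "shiftvec n i m = (\<lambda>u v. \<Sum>t=1..m. evec n t (i+1-t) u v - evec n (t-1) (i+1-t) u v)"

definition fstar :: "nat \<Rightarrow> nat \<Rightarrow> (nat \<Rightarrow> nat \<Rightarrow> int) \<Rightarrow> (nat \<Rightarrow> nat \<Rightarrow> int)" where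
  "fstar n i b = (\<lambda>u v. b u v + shiftvec n i (mstar i b) u v)"

(* None represents the formal symbol \<zero> *)
definition estar :: "nat \<Rightarrow> nat \<Rightarrow> (nat \<Rightarrow> nat \<Rightarrow> int) \<Rightarrow> (nat \<Rightarrow> nat \<Rightarrow> int) option" where
  "estar n i b = (if 0 < epsstar i b then Some (\<lambda>u v. b u v - shiftvec n i (Mstar i b) u v)
                  else None)"

end

theory Submission
  imports Defs
begin

text \<open>The partial sums telescope: \<open>\<Sigma>\<^sup>*\<^sub>k(b) = b(k, i+1-k) - b(k, i-k)\<close>.
  The shift vector of length \<open>m\<close> raises the first \<open>m\<close> entries of the anti-diagonal
  \<open>s + t = i + 1\<close> and lowers the first \<open>m - 1\<close> entries of the anti-diagonal \<open>s + t = i\<close>.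
  Raising or lowering an initial segment of a weakly decreasing chain keeps it decreasing except
  at the end of the segment. There the extremality of \<open>m\<^sub>i\<^sup>*\<close> (for \<open>f\<^sub>i\<^sup>*\<close>) resp. \<open>M\<^sub>i\<^sup>*\<close>
  (for \<open>e\<^sub>i\<^sup>*\<close>), read through the telescoped sums, gives exactly the strict inequality needed,
  and \<open>\<epsilon>\<^sub>i\<^sup>* > 0\<close> keeps the lowered entries nonnegative.\<close>

lemma Binf_outside_idx: "b \<in> Binf n \<Longrightarrow> (s,t) \<notin> idx n \<Longrightarrow> b s t = 0"
  by (simp add: Binf_def)

lemma Binf_nonneg: "b \<in> Binf n \<Longrightarrow> 0 \<le> b s t"
  unfolding Binf_def by (cases "(s,t) \<in> idx n") auto

lemma Binf_diagonal_step:
  "b \<in> Binf n \<Longrightarrow> 1 \<le> j \<Longrightarrow> j < k \<Longrightarrow> k \<le> n \<Longrightarrow> b (j+1) (k-j) \<le> b j (k+1-j)"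
  unfolding Binf_def by auto

lemma Binf_diagonal_antimono:
  assumes "b \<in> Binf n" "1 \<le> s1" "s1 \<le> s2" "s2 \<le> d" "d \<le> n"
  shows "b s2 (d+1-s2) \<le> b s1 (d+1-s1)"
  using assms(3,4)
proof (induction s2 rule: dec_induct)
  case base
  then show ?case by simp
next
  case (step s)
  have "b (s+1) (d-s) \<le> b s (d+1-s)"
    using Binf_diagonal_step[OF assms(1), of s d] step assms by auto
  then show ?case using step by simp
qed

lemma Sigstar_telescope:
  assumes "b \<in> Binf n" "k \<le> i"
  shows "Sigstar i b k = b k (i+1-k) - b k (i-k)"
  using assms(2)
proof (induction k)
  case 0
  have "b 0 t = 0" for t using Binf_outside_idx[OF assms(1)] by (simp add: idx_def)
  then show ?case by (simp add: Sigstar_def)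
next
  case (Suc k)
  have "Sigstar i b (Suc k) = Sigstar i b k + dstar b (Suc k) (i - k)"
    by (simp add: Sigstar_def)
  also have "\<dots> = b k (i+1-k) - b k (i-k) + dstar b (Suc k) (i - k)"
    using Suc by simp
  also have "dstar b (Suc k) (i - k)
      = b k (i-k) - b k (i+1-k) - b (Suc k) (i - Suc k) + b (Suc k) (i-k)"
    using Suc by (simp add: dstar_def Suc_diff_le)
  finally show ?case by simp
qed

lemma shiftvec_eq:
  assumes "m \<le> i" "i \<le> n"
  shows "shiftvec n i m u v = (if 1 \<le> u \<and> u \<le> m \<and> v = i+1-u then 1 else 0)
                             - (if 1 \<le> u \<and> u+1 \<le> m \<and> v = i-u then 1 else 0)"
proof -
  have raised: "evec n t (i+1-t) u v = (if t = u then (if v = i+1-u \<and> (u,v) \<in> idx n then 1 else 0) else 0)"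
    for t by (auto simp: evec_def)
  have lowered: "evec n (t-1) (i+1-t) u v
      = (if t = Suc u then (if 0 < u \<and> v = i-u \<and> (u,v) \<in> idx n then 1 else 0) else 0)" for t
    by (auto simp: evec_def idx_def)
  have "shiftvec n i m u v
      = (\<Sum>t=1..m. evec n t (i+1-t) u v) - (\<Sum>t=1..m. evec n (t-1) (i+1-t) u v)"
    by (simp add: shiftvec_def sum_subtractf)
  also have "(\<Sum>t=1..m. evec n t (i+1-t) u v) = (if 1 \<le> u \<and> u \<le> m \<and> v = i+1-u then 1 else 0)"
    unfolding raised using assms by (auto simp: idx_def)
  also have "(\<Sum>t=1..m. evec n (t-1) (i+1-t) u v) = (if 1 \<le> u \<and> u+1 \<le> m \<and> v = i-u then 1 else 0)"
    unfolding lowered using assms by (auto simp: idx_def)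
  finally show ?thesis .
qed

lemma Binf_add_shiftvec:
  assumes b: "b \<in> Binf n" and i: "1 \<le> i" "i \<le> n" and m: "1 \<le> m" "m \<le> i"
    and gap: "2 \<le> m \<Longrightarrow> b m (i-m) < b (m-1) (i+1-m)"
  shows "(\<lambda>u v. b u v + shiftvec n i m u v) \<in> Binf n"
proof -
  note sv = shiftvec_eq[OF m(2) i(2)]
  have outside: "b s t + shiftvec n i m s t = 0" if "(s,t) \<notin> idx n" for s t
    using that Binf_outside_idx[OF b] i m by (auto simp: sv idx_def)
  have nonneg: "0 \<le> b s t + shiftvec n i m s t" for s t
  proof (cases "1 \<le> s \<and> s+1 \<le> m \<and> t = i-s")
    case True
    have "b (m-1) (i-1+1-(m-1)) \<le> b s (i-1+1-s)"
      by (rule Binf_diagonal_antimono[OF b]) (use True i m in auto)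
    moreover have "i-1+1-(m-1) = i+1-m" "i-1+1-s = i-s" using True m by auto
    moreover have "0 \<le> b m (i-m)" by (rule Binf_nonneg[OF b])
    moreover have "-1 \<le> shiftvec n i m s t" unfolding sv by auto
    ultimately show ?thesis using gap True by force
  next
    case False
    then have "0 \<le> shiftvec n i m s t" unfolding sv by auto
    then show ?thesis using Binf_nonneg[OF b, of s t] by simp
  qed
  have chain: "b (j+1) (k-j) + shiftvec n i m (j+1) (k-j) \<le> b j (k+1-j) + shiftvec n i m j (k+1-j)"
    if jk: "k \<le> n" "1 \<le> j" "j < k" for j k
  proof -
    have old: "b (j+1) (k-j) \<le> b j (k+1-j)" by (rule Binf_diagonal_step[OF b]) (use jk in auto)
    show ?thesis
    proof (cases "k = i-1 \<and> j+1 = m")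
      case True
      then have idx: "k - j = i - m" "k+1-j = i+1-m" "2 \<le> m" "j = m - 1" using jk m by auto
      have "shiftvec n i m (j+1) (k-j) = 0" "shiftvec n i m j (k+1-j) = -1"
        unfolding sv using idx m by auto
      then show ?thesis using gap idx by simp
    next
      case False
      then have "shiftvec n i m (j+1) (k-j) \<le> shiftvec n i m j (k+1-j)"
        unfolding sv using jk m i by auto
      then show ?thesis using old by simp
    qed
  qed
  show ?thesis unfolding Binf_def using outside nonneg chain by auto
qed

lemma Binf_diff_shiftvec:
  assumes b: "b \<in> Binf n" and i: "1 \<le> i" "i \<le> n" and m: "1 \<le> m" "m \<le> i"
    and pos: "0 < b m (i+1-m)"
    and gap: "m < i \<Longrightarrow> b (m+1) (i-m) < b m (i+1-m)"
  shows "(\<lambda>u v. b u v - shiftvec n i m u v) \<in> Binf n"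
proof -
  note sv = shiftvec_eq[OF m(2) i(2)]
  have outside: "b s t - shiftvec n i m s t = 0" if "(s,t) \<notin> idx n" for s t
    using that Binf_outside_idx[OF b] i m by (auto simp: sv idx_def)
  have nonneg: "0 \<le> b s t - shiftvec n i m s t" for s t
  proof (cases "1 \<le> s \<and> s \<le> m \<and> t = i+1-s")
    case True
    have "b m (i+1-m) \<le> b s (i+1-s)"
      by (rule Binf_diagonal_antimono[OF b]) (use True i m in auto)
    moreover have "shiftvec n i m s t \<le> 1" unfolding sv by auto
    ultimately show ?thesis using pos True by force
  next
    case False
    then have "shiftvec n i m s t \<le> 0" unfolding sv by auto
    then show ?thesis using Binf_nonneg[OF b, of s t] by simp
  qed
  have chain: "b (j+1) (k-j) - shiftvec n i m (j+1) (k-j) \<le> b j (k+1-j) - shiftvec n i m j (k+1-j)"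
    if jk: "k \<le> n" "1 \<le> j" "j < k" for j k
  proof -
    have old: "b (j+1) (k-j) \<le> b j (k+1-j)" by (rule Binf_diagonal_step[OF b]) (use jk in auto)
    show ?thesis
    proof (cases "k = i \<and> j = m")
      case True
      then have idx: "k - j = i - m" "m < i" "k+1-j = i+1-m" using jk m by auto
      have "shiftvec n i m (j+1) (k-j) = 0" "shiftvec n i m j (k+1-j) = 1"
        unfolding sv using idx True m by auto
      then show ?thesis using gap idx True by simp
    next
      case False
      then have "shiftvec n i m j (k+1-j) \<le> shiftvec n i m (j+1) (k-j)"
        unfolding sv using jk m i by auto
      then show ?thesis using old by simp
    qed
  qed
  show ?thesis unfolding Binf_def using outside nonneg chain by auto
qed

lemma Sigstar_le_epsstar: "k \<in> {1..i} \<Longrightarrow> Sigstar i b k \<le> epsstar i b"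
  unfolding epsstar_def by simp

lemma epsstar_maximizers_nonempty:
  assumes "1 \<le> i"
  shows "{k \<in> {1..i}. Sigstar i b k = epsstar i b} \<noteq> {}"
proof -
  have "epsstar i b \<in> Sigstar i b ` {1..i}"
    unfolding epsstar_def using assms by (intro Max_in) auto
  then show ?thesis by force
qed

lemma mstar_maximizer:
  assumes "1 \<le> i"
  shows "mstar i b \<in> {1..i}" "Sigstar i b (mstar i b) = epsstar i b"
  using Min_in[OF _ epsstar_maximizers_nonempty[OF assms]] unfolding mstar_def by auto

lemma Mstar_maximizer:
  assumes "1 \<le> i"
  shows "Mstar i b \<in> {1..i}" "Sigstar i b (Mstar i b) = epsstar i b"
  using Max_in[OF _ epsstar_maximizers_nonempty[OF assms]] unfolding Mstar_def by auto

lemma Sigstar_less_below_mstar: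
  assumes "1 \<le> k" "k < mstar i b" "1 \<le> i"
  shows "Sigstar i b k < epsstar i b"
proof -
  have k: "k \<in> {1..i}" using assms mstar_maximizer(1)[OF assms(3), of b] by auto
  have "Sigstar i b k \<noteq> epsstar i b"
  proof
    assume "Sigstar i b k = epsstar i b"
    with k have "mstar i b \<le> k" unfolding mstar_def by (intro Min_le) simp_all
    with assms(2) show False by simp
  qed
  with Sigstar_le_epsstar[OF k, of b] show ?thesis by simp
qed

lemma Sigstar_less_above_Mstar:
  assumes "Mstar i b < k" "k \<le> i"
  shows "Sigstar i b k < epsstar i b"
proof -
  have k: "k \<in> {1..i}" using assms by auto
  have "Sigstar i b k \<noteq> epsstar i b"
  proof
    assume "Sigstar i b k = epsstar i b"
    with k have "k \<le> Mstar i b" unfolding Mstar_def by (intro Max_ge) simp_all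
    with assms(1) show False by simp
  qed
  with Sigstar_le_epsstar[OF k, of b] show ?thesis by simp
qed

lemma mstar_gap:
  assumes b: "b \<in> Binf n" and i: "1 \<le> i" "i \<le> n" and two_le: "2 \<le> mstar i b"
  shows "b (mstar i b) (i - mstar i b) < b (mstar i b - 1) (i + 1 - mstar i b)"
proof -
  define m where "m = mstar i b"
  have m_range: "2 \<le> m" "m \<le> i" using two_le mstar_maximizer(1)[OF i(1), of b] by (auto simp: m_def)
  have "Sigstar i b (m-1) < Sigstar i b m"
    using Sigstar_less_below_mstar[OF _ _ i(1), of "m-1" b] mstar_maximizer(2)[OF i(1), of b] m_range
    by (simp add: m_def)
  then have "b (m-1) (i+2-m) - b (m-1) (i+1-m) < b m (i+1-m) - b m (i-m)"
    using Sigstar_telescope[OF b, of "m-1" i] Sigstar_telescope[OF b, of m i] m_range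
    by (simp add: Suc_diff_le numeral_2_eq_2)
  moreover have "b m (i+1-m) \<le> b (m-1) (i+2-m)"
    using Binf_diagonal_step[OF b, of "m-1" i] m_range i by (simp add: Suc_diff_le numeral_2_eq_2)
  ultimately show ?thesis by (simp add: m_def)
qed

lemma Mstar_gap:
  assumes b: "b \<in> Binf n" and i: "1 \<le> i" "i \<le> n" and less: "Mstar i b < i"
  shows "b (Mstar i b + 1) (i - Mstar i b) < b (Mstar i b) (i + 1 - Mstar i b)"
proof -
  define M where "M = Mstar i b"
  have M_range: "1 \<le> M" "M < i" using less Mstar_maximizer(1)[OF i(1), of b] by (auto simp: M_def)
  have "Sigstar i b (M+1) < Sigstar i b M"
    using Sigstar_less_above_Mstar[of i b "M+1"] Mstar_maximizer(2)[OF i(1), of b] M_range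
    by (simp add: M_def)
  then have "b (M+1) (i-M) - b (M+1) (i-(M+1)) < b M (i+1-M) - b M (i-M)"
    using Sigstar_telescope[OF b, of "M+1" i] Sigstar_telescope[OF b, of M i] M_range by simp
  moreover have "b (M+1) (i-(M+1)) \<le> b M (i-M)"
  proof (cases "M + 1 < i")
    case True
    then show ?thesis
      using Binf_diagonal_step[OF b, of M "i-1"] M_range i by (simp add: Suc_diff_le)
  next
    case False
    then have "b (M+1) (i-(M+1)) = 0" using Binf_outside_idx[OF b] by (simp add: idx_def)
    then show ?thesis using Binf_nonneg[OF b] by simp
  qed
  ultimately show ?thesis by (simp add: M_def)
qed

lemma Mstar_entry_pos:
  assumes b: "b \<in> Binf n" and i: "1 \<le> i" and eps: "0 < epsstar i b"
  shows "0 < b (Mstar i b) (i + 1 - Mstar i b)"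
  using Mstar_maximizer[OF i, of b] Sigstar_telescope[OF b, of "Mstar i b" i] eps
    Binf_nonneg[OF b, of "Mstar i b" "i - Mstar i b"]
  by simp

theorem proposition6p4:
  fixes n i :: nat and b :: "nat \<Rightarrow> nat \<Rightarrow> int"
  assumes "1 \<le> n" and "b \<in> Binf n" and "i \<in> {1..n}"
  shows "(estar n i b = None \<or> (\<exists>b'. estar n i b = Some b' \<and> b' \<in> Binf n))
         \<and> fstar n i b \<in> Binf n"
proof -
  note b = assms(2)
  have i: "1 \<le> i" "i \<le> n" using assms(3) by auto
  have "fstar n i b \<in> Binf n"
    unfolding fstar_def
    using Binf_add_shiftvec[OF b i _ _ mstar_gap[OF b i]] mstar_maximizer(1)[OF i(1)] by auto
  moreover have "estar n i b = None \<or> (\<exists>b'. estar n i b = Some b' \<and> b' \<in> Binf n)"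
  proof (cases "0 < epsstar i b")
    case True
    then have "estar n i b = Some (\<lambda>u v. b u v - shiftvec n i (Mstar i b) u v)"
      by (simp add: estar_def)
    moreover have "(\<lambda>u v. b u v - shiftvec n i (Mstar i b) u v) \<in> Binf n"
      using Binf_diff_shiftvec[OF b i _ _ Mstar_entry_pos[OF b i(1) True] Mstar_gap[OF b i]]
        Mstar_maximizer(1)[OF i(1)] by auto
    ultimately show ?thesis by blast
  qed (simp add: estar_def)
  ultimately show ?thesis by blast
qed

end
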